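(* Let $1/\sqrt5\le c<3/2$ and $y_n=c/n^2$. Then the closed set $\mathcal E_c\subset\mathcal M$ satisfies $\mu_{\mathcal M}(\mathcal E_c)<1$, and for every irrational $x\in[0,1)$, $\mathcal R_n(x,y_n)\subset\mathcal E_c$ for infinitely many $n\in\mathbb N$.
   Context: $\Gamma=\mathrm{SL}_2(\mathbb Z)$, $\mathcal M=\Gamma\backslash\mathbb H$, $\mu_{\mathcal M}=\frac3\pi\frac{dx\,dy}{y^2}$ the normalized hyperbolic area. For $c>0$, $\mathcal E_c$ is the image under $\mathbb H\to\mathcal M$ of $\{z\in\mathbb H:\mathrm{Im}(z)\in[\tfrac1{2c},\tfrac1c]\cup[\tfrac2c,\tfrac4c]\cup[\tfrac9{2c},\infty)\}$. $\mathcal R_n(x,y)=\{\Gamma(x+\tfrac jn+iy):0\le j\le n-1\}$. *)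

theory Defs
  imports "HOL-Analysis.Analysis"
begin

definition H :: "complex set" where
  "H = {z. Im z > 0}"

definition SL2Z :: "(int \<times> int \<times> int \<times> int) set" where
  "SL2Z = {(a,b,c,d). a*d - b*c = 1}"

fun moeb :: "int \<times> int \<times> int \<times> int \<Rightarrow> complex \<Rightarrow> complex" where
  "moeb (a,b,c,d) z = (of_int a * z + of_int b) / (of_int c * z + of_int d)"

text \<open>The set of imaginary parts defining E_c (its lift to H before taking the orbit).\<close>
definition Ic :: "real \<Rightarrow> real set" where
  "Ic c = {1/(2*c) .. 1/c} \<union> {2/c .. 4/c} \<union> {9/(2*c) ..}"

text \<open>Full preimage in H of E_c under H -> Gamma\H: the Gamma-saturation of the strip set.\<close>
definition Ec_lift :: "real \<Rightarrow> complex set" where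
  "Ec_lift c = {z \<in> H. \<exists>g\<in>SL2Z. Im (moeb g z) \<in> Ic c}"

definition Fdom :: "complex set" where
  "Fdom = {z \<in> H. \<bar>Re z\<bar> \<le> 1/2 \<and> cmod z \<ge> 1}"

text \<open>Normalized hyperbolic measure on M, evaluated on a Gamma-invariant subset A of H
  (representing the subset of M it projects to) via the fundamental domain.\<close>
definition muM :: "complex set \<Rightarrow> ennreal" where
  "muM A = emeasure (density lborel (\<lambda>z. ennreal (3 / (pi * (Im z)^2)))) (A \<inter> Fdom)"

text \<open>Lift of R_n(x,y): the points x + j/n + iy, 0 <= j <= n-1.\<close>
definition Rn_lift :: "nat \<Rightarrow> real \<Rightarrow> real \<Rightarrow> complex set" where
  "Rn_lift n x y = {Complex (x + real j / real n) y | j. j < n}"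

end

theory Submission
  imports Defs
begin

(* E_c is the Gamma-saturation of the horizontal strips Im z \<in> Ic c, i.e. the set of z with
   Im z / |c' z + d'|^2 \<in> Ic c for some coprime bottom row (c', d'). It is closed in H because
   near any point only finitely many bottom rows give a value >= 1/(2c). The strip
   max (4/c) (2c) < Im z < 9/(2c) of the fundamental domain misses E_c and has positive measure,
   while the fundamental domain has measure 1, so muM E_c < 1.

   For irrational x, Hurwitz's theorem gives infinitely many n with |x - p/n| <= 1/(sqrt 5 n^2):
   among two Farey neighbours around x and their mediant, one approximates x that well.
   For such n, the point x + j/n + i c/n^2 of R_n is moved by the matrix with bottom row
   (n, -(p + j))/g, g = gcd n (p + j), to height g^2 c/(e^2 + c^2) with |e| <= 1/sqrt 5 <= c;
   this lies in [1/(2c), 1/c], [2/c, 4/c] or [9/(2c), oo) according as g = 1, g = 2 or g >= 3. *)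

section \<open>The hyperbolic measure of the fundamental domain\<close>

lemma Complex_pair_borel_measurable [measurable]:
  "(\<lambda>p::real \<times> real. Complex (fst p) (snd p)) \<in> borel_measurable borel"
  by (intro borel_measurable_continuous_onI continuous_intros)

lemma Complex_pair_lborel_measurable:
  "(\<lambda>p. Complex (fst p) (snd p)) \<in> measurable (lborel::(real \<times> real) measure) borel"
  by simp

lemma lborel_complex_eq_distr:
  "(lborel::complex measure) = distr (lborel::(real \<times> real) measure) borel (\<lambda>p. Complex (fst p) (snd p))"
proof (rule lborel_eqI)
  fix l u :: complex
  assume "\<And>b. b \<in> Basis \<Longrightarrow> l \<bullet> b \<le> u \<bullet> b"
  from this[of 1] this[of \<i>] have "Re l \<le> Re u" "Im l \<le> Im u"
    by (auto simp: Basis_complex_def)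
  moreover have "(\<lambda>p. Complex (fst p) (snd p)) -` box l u = box (Re l) (Re u) \<times> box (Im l) (Im u)"
    by (auto simp: in_box_complex_iff)
  ultimately show "emeasure (distr lborel borel (\<lambda>p. Complex (fst p) (snd p))) (box l u)
      = (\<Prod>b\<in>Basis. (u - l) \<bullet> b)"
    by (subst emeasure_distr[OF Complex_pair_lborel_measurable])
      (simp_all add: lborel.emeasure_pair_measure_Times Basis_complex_def ennreal_mult lborel_prod[symmetric])
qed simp

lemma nn_integral_lborel_complex:
  assumes f [measurable]: "f \<in> borel_measurable borel"
  shows "(\<integral>\<^sup>+z. f z \<partial>lborel) = (\<integral>\<^sup>+x. (\<integral>\<^sup>+y. f (Complex x y) \<partial>lborel) \<partial>lborel)"
proof -
  have "(\<integral>\<^sup>+z. f z \<partial>lborel) = (\<integral>\<^sup>+p. f (Complex (fst p) (snd p)) \<partial>(lborel::(real \<times> real) measure))"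
    by (subst lborel_complex_eq_distr) (simp add: nn_integral_distr)
  also have "\<dots> = (\<integral>\<^sup>+x. (\<integral>\<^sup>+y. f (Complex (fst (x, y)) (snd (x, y))) \<partial>lborel) \<partial>lborel)"
    by (subst lborel.nn_integral_fst) (simp_all add: lborel_prod)
  finally show ?thesis by simp
qed

definition hyperbolic_measure :: "complex measure" where
  "hyperbolic_measure = density lborel (\<lambda>z. ennreal (3 / (pi * (Im z)^2)))"

lemma muM_eq_hyperbolic_measure: "muM A = emeasure hyperbolic_measure (A \<inter> Fdom)"
  by (simp add: muM_def hyperbolic_measure_def)

lemma sets_hyperbolic_measure [simp]: "sets hyperbolic_measure = sets borel"
  by (simp add: hyperbolic_measure_def)

lemma emeasure_hyperbolic_measure:
  assumes "A \<in> sets borel"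
  shows "emeasure hyperbolic_measure A
    = ennreal (3/pi) * (\<integral>\<^sup>+x. (\<integral>\<^sup>+y. ennreal (1/y^2) * indicator A (Complex x y) \<partial>lborel) \<partial>lborel)"
proof -
  have "emeasure hyperbolic_measure A = (\<integral>\<^sup>+z. ennreal (3/pi) * (ennreal (1/(Im z)^2) * indicator A z) \<partial>lborel)"
    using assms unfolding hyperbolic_measure_def
    by (subst emeasure_density) (auto intro!: nn_integral_cong simp: ennreal_mult'[symmetric] indicator_def)
  also have "\<dots> = ennreal (3/pi) * (\<integral>\<^sup>+z. ennreal (1/(Im z)^2) * indicator A z \<partial>lborel)"
    using assms by (intro nn_integral_cmult) simp
  also have "(\<integral>\<^sup>+z. ennreal (1/(Im z)^2) * indicator A z \<partial>lborel)
      = (\<integral>\<^sup>+x. (\<integral>\<^sup>+y. ennreal (1/y^2) * indicator A (Complex x y) \<partial>lborel) \<partial>lborel)"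
    using assms by (subst nn_integral_lborel_complex) simp_all
  finally show ?thesis .
qed

lemma nn_integral_inverse_square_atLeastAtMost:
  assumes "0 < a" "a \<le> b"
  shows "(\<integral>\<^sup>+y. ennreal (1/y^2) * indicator {a..b} y \<partial>lborel) = ennreal (1/a - 1/b)"
proof (rule nn_integral_has_integral_lebesgue')
  have "((\<lambda>y. 1/y^2) has_integral (- 1/b - - 1/a)) {a..b}"
  proof (rule fundamental_theorem_of_calculus[OF assms(2)])
    fix y assume "y \<in> {a..b}"
    then have "y \<noteq> 0" using assms by auto
    then have "((\<lambda>y. - 1/y) has_real_derivative 1/y^2) (at y)"
      by (auto intro!: derivative_eq_intros simp: power2_eq_square)
    then show "((\<lambda>y. - 1/y) has_vector_derivative 1/y^2) (at y within {a..b})"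
      by (simp add: has_real_derivative_iff_has_vector_derivative has_vector_derivative_at_within)
  qed
  then show "((\<lambda>y. 1/y^2) has_integral (1/a - 1/b)) {a..b}" by simp
qed simp

lemma nn_integral_inverse_square_atLeast:
  assumes "0 < a"
  shows "(\<integral>\<^sup>+y. ennreal (1/y^2) * indicator {a..} y \<partial>lborel) = ennreal (1/a)"
  using assms has_integral_inverse_power_to_inf[of 2 a]
  by (intro nn_integral_has_integral_lebesgue') simp_all

lemma Fdom_eq: "Fdom = {z. 0 \<le> Im z} \<inter> {z. \<bar>Re z\<bar> \<le> 1/2} \<inter> {z. 1 \<le> cmod z}"
proof -
  have "Im z \<noteq> 0" if "\<bar>Re z\<bar> \<le> 1/2" "1 \<le> cmod z" for z
  proof
    assume "Im z = 0"
    then have "cmod z = \<bar>Re z\<bar>" by (simp add: cmod_def)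
    with that show False by simp
  qed
  then show ?thesis unfolding Fdom_def H_def by force
qed

lemma closed_Fdom: "closed Fdom"
  unfolding Fdom_eq by (intro closed_Int closed_Collect_le continuous_intros)

lemma Fdom_subset_H: "Fdom \<subseteq> H"
  by (auto simp: Fdom_def)

lemma Complex_in_Fdom_iff: "Complex x y \<in> Fdom \<longleftrightarrow> \<bar>x\<bar> \<le> 1/2 \<and> sqrt (1 - x^2) \<le> y"
proof (cases "\<bar>x\<bar> \<le> 1/2")
  case True
  then have "x^2 \<le> 1/4" using abs_le_square_iff[of x "1/2"] by (simp add: power_divide)
  then have pos: "0 < sqrt (1 - x^2)" by simp
  have "sqrt (1 - x^2) \<le> y \<longleftrightarrow> 0 < y \<and> 1 - x^2 \<le> y^2"
  proof
    assume y: "sqrt (1 - x^2) \<le> y"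
    then have "(sqrt (1 - x^2))^2 \<le> y^2" using pos by (intro power_mono) auto
    moreover have "0 < y" using y pos by linarith
    ultimately show "0 < y \<and> 1 - x^2 \<le> y^2" using \<open>x^2 \<le> 1/4\<close> by simp
  next
    assume "0 < y \<and> 1 - x^2 \<le> y^2"
    then show "sqrt (1 - x^2) \<le> y" by (simp add: real_le_lsqrt)
  qed
  moreover have "1 \<le> sqrt (x^2 + y^2) \<longleftrightarrow> 1 - x^2 \<le> y^2" by auto
  ultimately show ?thesis using True by (auto simp: Fdom_def H_def cmod_def)
qed (auto simp: Fdom_def)

lemma nn_integral_arcsin_derivative:
  "(\<integral>\<^sup>+x. ennreal (1 / sqrt (1 - x^2)) * indicator {-1/2..1/2} x \<partial>lborel) = ennreal (pi/3)"
proof (rule nn_integral_has_integral_lebesgue')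
  have "((\<lambda>x. 1 / sqrt (1 - x^2)) has_integral (arcsin (1/2) - arcsin (-1/2))) {-1/2..1/2}"
  proof (rule fundamental_theorem_of_calculus)
    fix x :: real assume "x \<in> {-1/2..1/2}"
    then have "(arcsin has_real_derivative 1 / sqrt (1 - x^2)) (at x)"
      using DERIV_arcsin[of x] by (simp add: inverse_eq_divide)
    then show "(arcsin has_vector_derivative 1 / sqrt (1 - x^2)) (at x within {-1/2..1/2})"
      by (simp add: has_real_derivative_iff_has_vector_derivative has_vector_derivative_at_within)
  qed simp
  then show "((\<lambda>x. 1 / sqrt (1 - x^2)) has_integral pi/3) {-1/2..1/2}" by simp
next
  fix x :: real assume "x \<in> {-1/2..1/2}"
  then have "\<bar>x\<bar> \<le> 1" by auto
  then have "x^2 \<le> 1" by (simp add: abs_square_le_1)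
  then show "0 \<le> 1 / sqrt (1 - x^2)" by simp
qed

lemma emeasure_hyperbolic_Fdom: "emeasure hyperbolic_measure Fdom = 1"
proof -
  have "emeasure hyperbolic_measure Fdom
      = ennreal (3/pi) * (\<integral>\<^sup>+x. ennreal (1 / sqrt (1 - x^2)) * indicator {-1/2..1/2} x \<partial>lborel)"
  proof (subst emeasure_hyperbolic_measure, simp add: closed_Fdom borel_closed, intro arg_cong2[where f = "(*)"] refl nn_integral_cong)
    fix x :: real
    show "(\<integral>\<^sup>+y. ennreal (1/y^2) * indicator Fdom (Complex x y) \<partial>lborel)
        = ennreal (1 / sqrt (1 - x^2)) * indicator {-1/2..1/2} x"
    proof (cases "\<bar>x\<bar> \<le> 1/2")
      case True
      then have "x^2 < 1" using abs_le_square_iff[of x "1/2"] by (simp add: power_divide)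
      then have "(\<integral>\<^sup>+y. ennreal (1/y^2) * indicator Fdom (Complex x y) \<partial>lborel)
          = (\<integral>\<^sup>+y. ennreal (1/y^2) * indicator {sqrt (1 - x^2)..} y \<partial>lborel)"
        using True by (intro nn_integral_cong) (simp add: indicator_def Complex_in_Fdom_iff)
      also have "\<dots> = ennreal (1 / sqrt (1 - x^2))"
        using \<open>x^2 < 1\<close> by (intro nn_integral_inverse_square_atLeast) simp
      finally show ?thesis using True by (auto simp: indicator_def split: abs_split)
    qed (auto simp: indicator_def Complex_in_Fdom_iff split: abs_split)
  qed
  also have "\<dots> = 1"
    unfolding nn_integral_arcsin_derivative by (simp add: ennreal_mult'[symmetric])
  finally show ?thesis .
qed

lemma emeasure_hyperbolic_strip:
  assumes "0 < a" "a \<le> b"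
  shows "emeasure hyperbolic_measure {z. \<bar>Re z\<bar> \<le> 1/2 \<and> a \<le> Im z \<and> Im z \<le> b}
    = ennreal (3/pi * (1/a - 1/b))"
proof -
  let ?S = "{z. \<bar>Re z\<bar> \<le> 1/2 \<and> a \<le> Im z \<and> Im z \<le> b}"
  have "closed ?S" by (intro closed_Collect_conj closed_Collect_le continuous_intros)
  then have "emeasure hyperbolic_measure ?S
      = ennreal (3/pi) * (\<integral>\<^sup>+x. ennreal (1/a - 1/b) * indicator {-1/2..1/2::real} x \<partial>lborel)"
  proof (subst emeasure_hyperbolic_measure, simp add: borel_closed, intro arg_cong2[where f = "(*)"] refl nn_integral_cong)
    fix x :: real
    have "(\<integral>\<^sup>+y. ennreal (1/y^2) * indicator ?S (Complex x y) \<partial>lborel)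
        = (\<integral>\<^sup>+y. ennreal (1/y^2) * indicator {a..b} y * indicator {-1/2..1/2} x \<partial>lborel)"
      by (intro nn_integral_cong) (auto simp: indicator_def split: abs_split)
    also have "\<dots> = ennreal (1/a - 1/b) * indicator {-1/2..1/2} x"
      using assms by (simp add: nn_integral_multc nn_integral_inverse_square_atLeastAtMost)
    finally show "(\<integral>\<^sup>+y. ennreal (1/y^2) * indicator ?S (Complex x y) \<partial>lborel)
        = ennreal (1/a - 1/b) * indicator {-1/2..1/2} x" .
  qed
  also have "\<dots> = ennreal (3/pi * (1/a - 1/b))"
    using assms by (simp add: nn_integral_cmult_indicator ennreal_mult'[symmetric])
  finally show ?thesis .
qed

section \<open>Bottom rows and the set E_c\<close>

lemma Im_moeb_SL2Z:
  assumes "(a, b, c, d) \<in> SL2Z"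
  shows "Im (moeb (a, b, c, d) z) = Im z / (cmod (of_int c * z + of_int d))^2"
proof -
  have "Im (moeb (a, b, c, d) z) = of_int (a*d - b*c) * Im z / (cmod (of_int c * z + of_int d))^2"
    unfolding moeb.simps Im_divide cmod_power2
    by (rule arg_cong2[where f="(/)"]) (simp_all add: algebra_simps)
  with assms show ?thesis by (simp add: SL2Z_def)
qed

lemma SL2Z_bottom_row_iff: "(\<exists>a b. (a, b, c, d) \<in> SL2Z) \<longleftrightarrow> coprime c d"
proof
  assume "\<exists>a b. (a, b, c, d) \<in> SL2Z"
  then obtain a b where "a*d - b*c = 1" by (auto simp: SL2Z_def)
  then have "(-b) * c + a * d = 1" by simp
  then show "coprime c d" by (metis coprime_iff_gcd_eq_1 dvd_add dvd_mult gcd_dvd1 gcd_dvd2 is_unit_gcd)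
next
  assume "coprime c d"
  then obtain s t where "s * c + t * d = 1" using bezout_int[of c d] by (auto simp: coprime_iff_gcd_eq_1)
  then have "(t, -s, c, d) \<in> SL2Z" by (simp add: SL2Z_def algebra_simps)
  then show "\<exists>a b. (a, b, c, d) \<in> SL2Z" by blast
qed

lemma Ec_lift_eq:
  "Ec_lift c0 = {z \<in> H. \<exists>c d. coprime c d \<and> Im z / (cmod (of_int c * z + of_int d))^2 \<in> Ic c0}"
  unfolding Ec_lift_def SL2Z_bottom_row_iff[symmetric]
proof (intro Collect_cong conj_cong refl iffI)
  fix z assume "\<exists>g\<in>SL2Z. Im (moeb g z) \<in> Ic c0"
  then obtain a b c d where "(a, b, c, d) \<in> SL2Z" "Im (moeb (a, b, c, d) z) \<in> Ic c0"
    by (metis prod_cases4)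
  then show "\<exists>c d. (\<exists>a b. (a, b, c, d) \<in> SL2Z) \<and> Im z / (cmod (of_int c * z + of_int d))^2 \<in> Ic c0"
    by (metis Im_moeb_SL2Z)
qed (metis Im_moeb_SL2Z)

lemma coprime_bottom_row_nonzero:
  assumes "coprime c d" "z \<in> H"
  shows "of_int c * z + of_int d \<noteq> 0"
proof
  assume eq: "of_int c * z + of_int d = 0"
  have "c = 0" using arg_cong[OF eq, of Im] assms(2) by (simp add: H_def)
  with eq assms(1) show False by simp
qed

lemma Ic_lower_bound:
  assumes "0 < c0" "t \<in> Ic c0"
  shows "1/(2*c0) \<le> t"
proof -
  have "1/(2*c0) \<le> 2/c0" "1/(2*c0) \<le> 9/(2*c0)" using assms(1) by (simp_all add: field_simps)
  then show ?thesis using assms(2) unfolding Ic_def by auto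
qed

lemma bottom_row_bounds:
  fixes c d :: int
  assumes "0 < \<epsilon>" and le: "\<epsilon> \<le> Im w / (cmod (of_int c * w + of_int d))^2"
  shows "\<bar>c\<bar> \<le> sqrt (1 / (\<epsilon> * Im w))" "\<bar>c * Re w + d\<bar> \<le> sqrt (Im w / \<epsilon>)"
proof -
  define Q where "Q = (cmod (of_int c * w + of_int d))^2"
  have Q: "Q = (c * Re w + d)^2 + (c * Im w)^2" by (simp add: Q_def cmod_power2)
  have "0 < Im w / Q" using assms by (simp add: Q_def)
  moreover have "0 \<le> Q" by (simp add: Q_def)
  ultimately have "0 < Q" "0 < Im w" by (auto simp: zero_less_divide_iff)
  then have "Q \<le> Im w / \<epsilon>" using assms by (simp add: Q_def field_simps)
  moreover have "(c * Im w)^2 \<le> Q" "(c * Re w + d)^2 \<le> Q" unfolding Q by simp_all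
  ultimately have "(c * Im w)^2 \<le> Im w / \<epsilon>" "(c * Re w + d)^2 \<le> Im w / \<epsilon>" by linarith+
  then have "c^2 \<le> 1 / (\<epsilon> * Im w)" "(c * Re w + d)^2 \<le> Im w / \<epsilon>"
    using \<open>0 < Im w\<close> \<open>0 < \<epsilon>\<close> by (simp_all add: field_simps power2_eq_square)
  then show "\<bar>c\<bar> \<le> sqrt (1 / (\<epsilon> * Im w))" "\<bar>c * Re w + d\<bar> \<le> sqrt (Im w / \<epsilon>)"
    by (simp_all add: real_le_rsqrt)
qed

lemma finite_bottom_rows_near:
  assumes "0 < \<epsilon>" "0 < Im z"
  shows "finite {(c::int, d::int). \<exists>w\<in>ball z (Im z/2). \<epsilon> \<le> Im w / (cmod (of_int c * w + of_int d))^2}"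
proof -
  define y where "y = Im z"
  define Kc where "Kc = sqrt (2 / (\<epsilon> * y))"
  define N where "N = \<lceil>Kc + sqrt (3 * y / (2 * \<epsilon>)) + Kc * (\<bar>Re z\<bar> + y)\<rceil>"
  have bounded: "\<bar>c\<bar> \<le> N \<and> \<bar>d\<bar> \<le> N"
    if w: "w \<in> ball z (y/2)" and le: "\<epsilon> \<le> Im w / (cmod (of_int c * w + of_int d))^2" for w c d
  proof -
    have Im: "\<bar>Im z - Im w\<bar> < y/2" and Re: "\<bar>Re z - Re w\<bar> < y/2"
      using w abs_Im_le_cmod[of "z - w"] abs_Re_le_cmod[of "z - w"] by (auto simp: dist_norm y_def)
    from Im have Imw: "y/2 < Im w" "Im w < 3*y/2"
      unfolding y_def abs_less_iff by linarith+
    from Re have Rew: "\<bar>Re w\<bar> \<le> \<bar>Re z\<bar> + y"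
      unfolding abs_less_iff abs_le_iff using abs_ge_self[of "Re z"] abs_ge_minus_self[of "Re z"] by linarith
    have "\<bar>c\<bar> \<le> sqrt (1 / (\<epsilon> * Im w))" "\<bar>c * Re w + d\<bar> \<le> sqrt (Im w / \<epsilon>)"
      using bottom_row_bounds[OF assms(1) le] by auto
    moreover have "sqrt (1 / (\<epsilon> * Im w)) \<le> Kc" "sqrt (Im w / \<epsilon>) \<le> sqrt (3 * y / (2 * \<epsilon>))"
      using Imw assms by (auto simp: Kc_def y_def field_simps)
    ultimately have c: "\<bar>c\<bar> \<le> Kc" and "\<bar>c * Re w + d\<bar> \<le> sqrt (3 * y / (2 * \<epsilon>))"
      by linarith+
    moreover have "\<bar>c * Re w\<bar> \<le> Kc * (\<bar>Re z\<bar> + y)"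
      unfolding abs_mult using c Rew by (intro mult_mono) auto
    ultimately have "\<bar>real_of_int d\<bar> \<le> sqrt (3 * y / (2 * \<epsilon>)) + Kc * (\<bar>Re z\<bar> + y)"
      by linarith
    moreover have "0 \<le> Kc" "0 \<le> sqrt (3 * y / (2 * \<epsilon>))" "0 \<le> Kc * (\<bar>Re z\<bar> + y)"
      using assms by (simp_all add: Kc_def y_def)
    ultimately show ?thesis using c unfolding N_def by (simp add: le_ceiling_iff)
  qed
  have "{(c, d). \<exists>w\<in>ball z (Im z/2). \<epsilon> \<le> Im w / (cmod (of_int c * w + of_int d))^2} \<subseteq> {-N..N} \<times> {-N..N}"
    using bounded unfolding y_def by fastforce
  then show ?thesis by (rule finite_subset) simp
qed

lemma closedin_Ec_lift:
  assumes "0 < c0"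
  shows "closedin (top_of_set H) (Ec_lift c0)"
proof -
  define f where "f c d z = Im z / (cmod (of_int c * z + of_int d))^2" for c d :: int and z
  define U where "U = (\<lambda>(c, d). {z \<in> H. f c d z \<in> Ic c0})"
  have Ec: "Ec_lift c0 = \<Union> (U ` {(c, d). coprime c d})"
    by (auto simp: Ec_lift_eq U_def f_def)
  show ?thesis
    unfolding Ec
  proof (rule closedin_locally_finite_Union)
    fix S assume "S \<in> U ` {(c, d). coprime c d}"
    then obtain c d where cd: "coprime c d" and S: "S = H \<inter> f c d -` Ic c0"
      by (auto simp: U_def)
    have "continuous_on H (f c d)"
      using coprime_bottom_row_nonzero[OF cd] unfolding f_def by (auto intro!: continuous_intros)
    moreover have "closed (Ic c0)" unfolding Ic_def by (intro closed_Un closed_atLeastAtMost closed_atLeast)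
    ultimately show "closedin (top_of_set H) S"
      unfolding S by (rule continuous_closedin_preimage)
  next
    show "locally_finite_in (top_of_set H) (U ` {(c, d). coprime c d})"
      unfolding locally_finite_in_def
    proof (intro conjI ballI)
      show "\<Union> (U ` {(c, d). coprime c d}) \<subseteq> topspace (top_of_set H)" by (auto simp: U_def)
      fix z assume "z \<in> topspace (top_of_set H)"
      then have "0 < Im z" by (simp add: H_def)
      let ?V = "H \<inter> ball z (Im z/2)"
      have sub: "{S \<in> U ` {(c, d). coprime c d}. S \<inter> ?V \<noteq> {}}
          \<subseteq> U ` {(c, d). \<exists>w\<in>ball z (Im z/2). 1/(2*c0) \<le> f c d w}"
        using Ic_lower_bound[OF assms] unfolding U_def by blast
      have "finite {(c, d). \<exists>w\<in>ball z (Im z/2). 1/(2*c0) \<le> f c d w}"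
        unfolding f_def using assms \<open>0 < Im z\<close> by (intro finite_bottom_rows_near) simp_all
      then have "finite {S \<in> U ` {(c, d). coprime c d}. S \<inter> ?V \<noteq> {}}"
        by (rule finite_subset[OF sub finite_imageI])
      moreover have "openin (top_of_set H) ?V" "z \<in> ?V"
        using \<open>0 < Im z\<close> \<open>z \<in> topspace (top_of_set H)\<close> by (auto intro: openin_open_Int)
      ultimately show "\<exists>V. openin (top_of_set H) V \<and> z \<in> V \<and> finite {S \<in> U ` {(c, d). coprime c d}. S \<inter> V \<noteq> {}}"
        by blast
    qed
  qed
qed

text \<open>The bottom rows \<open>(0, \<plusminus>1)\<close> give \<open>Im z\<close> itself, which falls into the gap between
  \<open>4/c0\<close> and \<open>9/(2 c0)\<close> of \<open>Ic c0\<close>; every other row gives at most \<open>1 / Im z < 1/(2 c0)\<close>.\<close>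

lemma not_in_Ec_lift_gap:
  assumes "0 < c0" "4/c0 < Im z" "2*c0 < Im z" "Im z < 9/(2*c0)"
  shows "z \<notin> Ec_lift c0"
proof
  assume "z \<in> Ec_lift c0"
  then obtain c d where cd: "coprime c d"
    and Ic: "Im z / (cmod (of_int c * z + of_int d))^2 \<in> Ic c0"
    by (auto simp: Ec_lift_eq)
  have y: "0 < Im z" using assms(1,2) divide_pos_pos[of 4 c0] by linarith
  show False
  proof (cases "c = 0")
    case True
    then have "d = 1 \<or> d = -1" using cd by auto
    then have "(cmod (of_int c * z + of_int d))^2 = 1"
      using True by (auto simp: cmod_power2)
    moreover have "1/c0 < 4/c0" using assms(1) by (simp add: divide_strict_right_mono)
    ultimately show False using Ic assms unfolding Ic_def by auto
  next
    case False
    then have "1 \<le> c^2" using one_le_power[of "\<bar>c\<bar>" 2] by simp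
    then have "(Im z)^2 \<le> (c * Im z)^2"
      by (simp add: power_mult_distrib mult_le_cancel_right1 flip: of_int_power)
    also have "\<dots> \<le> (cmod (of_int c * z + of_int d))^2" by (simp add: cmod_power2)
    finally have le: "(Im z)^2 \<le> (cmod (of_int c * z + of_int d))^2" .
    have "0 < (Im z)^2" using y by simp
    with le have "0 < (cmod (of_int c * z + of_int d))^2 * (Im z)^2"
      by (intro mult_pos_pos) linarith+
    then have "Im z / (cmod (of_int c * z + of_int d))^2 \<le> Im z / (Im z)^2"
      using y by (intro divide_left_mono[OF le]) auto
    also have "\<dots> < 1/(2*c0)" using y assms by (simp add: power2_eq_square field_simps)
    finally show False using Ic_lower_bound[OF assms(1) Ic] by simp
  qed
qed

lemma muM_Ec_lift_less_1:
  assumes "0 < c0" "c0 < 3/2"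
  shows "muM (Ec_lift c0) < 1"
proof -
  define L where "L = max (4/c0) (2*c0)"
  define U where "U = 9/(2*c0)"
  have "2*c0 < U" using assms mult_strict_mono[of c0 "3/2" c0 "3/2"] by (simp add: U_def field_simps)
  moreover have "4/c0 < U" using assms by (simp add: U_def field_simps)
  ultimately have "L < U" by (simp add: L_def)
  have "1 < 4/c0" using assms by (simp add: field_simps)
  then have "1 < L" by (simp add: L_def)
  define a where "a = (2*L + U)/3"
  define b where "b = (L + 2*U)/3"
  have ab: "L < a" "a < b" "b < U" using \<open>L < U\<close> by (simp_all add: a_def b_def)
  define S where "S = {z. \<bar>Re z\<bar> \<le> 1/2 \<and> a \<le> Im z \<and> Im z \<le> b}"
  have "closed S" unfolding S_def by (intro closed_Collect_conj closed_Collect_le continuous_intros)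
  then have S_sets: "S \<in> sets hyperbolic_measure" by (simp add: borel_closed)
  have "S \<subseteq> Fdom"
  proof
    fix z assume "z \<in> S"
    then have "\<bar>Re z\<bar> \<le> 1/2" "1 < Im z" using \<open>1 < L\<close> ab by (auto simp: S_def)
    moreover have "Im z \<le> cmod z" using abs_Im_le_cmod[of z] by linarith
    ultimately show "z \<in> Fdom" by (simp add: Fdom_def H_def)
  qed
  have "Ec_lift c0 \<inter> Fdom \<subseteq> Fdom - S"
    using not_in_Ec_lift_gap[OF assms(1)] ab by (fastforce simp: S_def L_def U_def)
  then have "muM (Ec_lift c0) \<le> emeasure hyperbolic_measure (Fdom - S)"
    unfolding muM_eq_hyperbolic_measure using closed_Fdom \<open>closed S\<close>
    by (intro emeasure_mono) (auto simp: borel_closed)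
  also have "\<dots> = 1 - ennreal (3/pi * (1/a - 1/b))"
    using emeasure_hyperbolic_Fdom emeasure_hyperbolic_strip[of a b] \<open>S \<subseteq> Fdom\<close> S_sets \<open>1 < L\<close> ab
    by (subst emeasure_Diff) (auto simp: S_def closed_Fdom borel_closed)
  also have "\<dots> < 1"
    using \<open>1 < L\<close> ab by (intro ennreal_between) (auto simp: field_simps)
  finally show ?thesis .
qed

lemma square_multiple_in_Ic:
  fixes g :: int and w :: real
  assumes "0 < c0" "1/(2*c0) \<le> w" "w \<le> 1/c0" "1 \<le> g"
  shows "(of_int g)^2 * w \<in> Ic c0"
proof -
  consider "g = 1" | "g = 2" | "3 \<le> g" using assms(4) by linarith
  then show ?thesis
  proof cases
    case 1
    then show ?thesis using assms by (simp add: Ic_def)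
  next
    case 2
    then have "(of_int g)^2 * w \<in> {2/c0..4/c0}" using assms by (simp add: field_simps)
    then show ?thesis by (simp add: Ic_def)
  next
    case 3
    then have "9 \<le> real_of_int g ^ 2" using power_mono[of 3 "real_of_int g" 2] by simp
    moreover have "9/(2*c0) \<le> 9 * w" using assms by (simp add: field_simps)
    ultimately have "9/(2*c0) \<le> (of_int g)^2 * w"
      using assms mult_right_mono[of 9 "real_of_int g ^ 2" w] by simp
    then show ?thesis by (simp add: Ic_def)
  qed
qed

lemma Complex_near_rational_in_Ec_lift:
  fixes n :: nat and u :: int
  assumes n: "0 < n" and c0: "0 < c0" and s: "(real n)^2 * \<bar>s\<bar> \<le> c0"
  shows "Complex (u / n + s) (c0 / (real n)^2) \<in> Ec_lift c0"
proof -
  define z where "z = Complex (u / n + s) (c0 / (real n)^2)"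
  define g where "g = gcd (int n) u"
  have "0 < g" using n by (simp add: g_def)
  define c d where "c = int n div g" and "d = - (u div g)"
  have "coprime c d"
    using div_gcd_coprime[of "int n" u] n by (simp add: c_def d_def g_def)
  have "of_int c * z + of_int d = Complex (n * s) (c0 / n) / of_int g"
    using n \<open>0 < g\<close>
    by (simp add: z_def c_def d_def g_def Complex_eq real_of_int_div of_int_div field_simps power2_eq_square)
  then have "(cmod (of_int c * z + of_int d))^2 = ((n * s)^2 + (c0 / n)^2) / (real_of_int g)^2"
    by (simp add: norm_divide power_divide cmod_power2)
  moreover define e where "e = n^2 * s"
  moreover define w where "w = c0 / (e^2 + c0^2)"
  ultimately have Im_eq: "Im z / (cmod (of_int c * z + of_int d))^2 = g^2 * w"
    using n c0 by (simp add: z_def w_def field_simps power2_eq_square)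
  have "e^2 \<le> c0^2"
    using s by (simp add: e_def abs_le_square_iff[symmetric] abs_mult)
  moreover have "0 < e^2 + c0^2" using c0 by (simp add: add_nonneg_pos)
  ultimately have "1/(2*c0) \<le> w" "w \<le> 1/c0"
    using c0 by (simp_all add: w_def divide_simps power2_eq_square)
  then have "Im z / (cmod (of_int c * z + of_int d))^2 \<in> Ic c0"
    unfolding Im_eq using square_multiple_in_Ic[OF c0] \<open>0 < g\<close> by simp
  moreover have "z \<in> H" using n c0 by (simp add: z_def H_def)
  ultimately show ?thesis
    using \<open>coprime c d\<close> unfolding z_def Ec_lift_eq by blast
qed

lemma Rn_lift_subset_Ec_lift:
  fixes p :: int
  assumes c0: "1/sqrt 5 \<le> c0" and n: "0 < n" and p: "\<bar>x - p/n\<bar> \<le> 1 / (sqrt 5 * (real n)^2)"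
  shows "Rn_lift n x (c0 / (real n)^2) \<subseteq> Ec_lift c0"
proof
  fix z assume "z \<in> Rn_lift n x (c0 / (real n)^2)"
  then obtain j :: nat where z: "z = Complex (x + j/n) (c0 / (real n)^2)"
    by (auto simp: Rn_lift_def)
  have "(real n)^2 * \<bar>x - p/n\<bar> \<le> 1/sqrt 5"
    using p n by (simp add: field_simps)
  then have "(real n)^2 * \<bar>x - p/n\<bar> \<le> c0" using c0 by linarith
  moreover have "0 < c0" using c0 less_le_trans[of 0 "1/sqrt 5" c0] by simp
  ultimately have "Complex (of_int (p + int j) / n + (x - p/n)) (c0 / (real n)^2) \<in> Ec_lift c0"
    by (intro Complex_near_rational_in_Ec_lift n)
  moreover have "of_int (p + int j) / n + (x - p/n) = x + j/n"
    by (simp add: add_divide_distrib)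
  ultimately show "z \<in> Ec_lift c0" by (simp only: z)
qed

section \<open>Hurwitz's theorem\<close>

text \<open>Both \<open>t = D\<close> and \<open>t = B + D\<close> would lie strictly between the roots \<open>(sqrt 5 \<plusminus> 1) B / 2\<close>
  of \<open>t\<^sup>2 - sqrt 5 B t + B\<^sup>2\<close>, which are only \<open>B\<close> apart.\<close>

lemma sqrt5_quadratic_gap:
  fixes B D :: real
  assumes "0 < B" "B^2 + D^2 < sqrt 5 * B * D" "B^2 + (B + D)^2 < sqrt 5 * B * (B + D)"
  shows False
proof -
  have between_roots: "(sqrt 5 - 1) * B < 2 * t \<and> 2 * t < (sqrt 5 + 1) * B"
    if "B^2 + t^2 < sqrt 5 * B * t" for t
  proof -
    have neg: "(2*t - (sqrt 5 - 1)*B) * (2*t - (sqrt 5 + 1)*B) < 0"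
      using that by (simp add: algebra_simps power2_eq_square)
    show ?thesis
    proof (rule ccontr)
      assume "\<not> ?thesis"
      then have "2*t - (sqrt 5 - 1)*B \<le> 0 \<and> 2*t - (sqrt 5 + 1)*B \<le> 0
          \<or> 0 \<le> 2*t - (sqrt 5 - 1)*B \<and> 0 \<le> 2*t - (sqrt 5 + 1)*B"
        using assms(1) by (auto simp: algebra_simps)
      then show False
        using neg mult_nonpos_nonpos mult_nonneg_nonneg by (metis not_le)
    qed
  qed
  from between_roots[OF assms(2)] between_roots[OF assms(3)] show False
    by (simp add: algebra_simps)
qed

lemma Farey_pair_badly_approximating:
  fixes a b c d :: int and x :: real
  assumes b: "0 < b" and d: "0 < d" and det: "b*c - a*d = 1" and "a/b < x" "x < c/d"
    and far_a: "1 / (sqrt 5 * b^2) < \<bar>x - a/b\<bar>" and far_c: "1 / (sqrt 5 * d^2) < \<bar>x - c/d\<bar>"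
  shows "(real_of_int b)^2 + (real_of_int d)^2 < sqrt 5 * b * d"
proof -
  define K where "K = sqrt 5 * b^2 * d^2"
  have "0 < K" using b d by (simp add: K_def)
  have "real_of_int b * c - a * d = 1" using arg_cong[OF det, of real_of_int] by simp
  then have "1 / (b * d) = (x - a/b) + (c/d - x)" using b d by (simp add: field_simps)
  then have "1 / (sqrt 5 * b^2) + 1 / (sqrt 5 * d^2) < 1 / (b * d)"
    using far_a far_c \<open>a/b < x\<close> \<open>x < c/d\<close> by simp
  moreover have "1 / (sqrt 5 * b^2) + 1 / (sqrt 5 * d^2) = (b^2 + d^2) / K"
    using b d by (simp add: K_def field_simps power2_eq_square)
  moreover have "1 / (b * d) = (sqrt 5 * b * d) / K"
    using b d by (simp add: K_def field_simps power2_eq_square)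
  ultimately show ?thesis
    using divide_less_cancel[of "b^2 + d^2" K "sqrt 5 * b * d"] \<open>0 < K\<close> by simp
qed

lemma hurwitz_Farey_triple:
  fixes a b c d :: int and x :: real
  assumes b: "0 < b" and d: "0 < d" and det: "b*c - a*d = 1" and ax: "a/b < x" and xc: "x < c/d"
    and x_ne: "x \<noteq> of_int (a + c) / of_int (b + d)"
  shows "\<exists>(p, q) \<in> {(a, b), (c, d), (a + c, b + d)}. \<bar>x - of_int p / of_int q\<bar> \<le> 1 / (sqrt 5 * (of_int q)^2)"
proof (rule ccontr)
  assume "\<not> ?thesis"
  then have far: "1 / (sqrt 5 * (of_int q)^2) < \<bar>x - of_int p / of_int q\<bar>"
    if "(p, q) \<in> {(a, b), (c, d), (a + c, b + d)}" for p q
    using that by (auto simp: not_le)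
  note far_a = far[of a b] and far_c = far[of c d] and far_m = far[of "a + c" "b + d"]
  have bd: "0 < b + d" using b d by simp
  have det_left: "b * (a + c) - a * (b + d) = 1" and det_right: "(b + d) * c - (a + c) * d = 1"
    using det by (simp_all add: algebra_simps)
  have outer: "(real_of_int b)^2 + (real_of_int d)^2 < sqrt 5 * b * d"
    using Farey_pair_badly_approximating[OF b d det ax xc] far_a far_c by simp
  show False
  proof (cases "x < of_int (a + c) / of_int (b + d)")
    case True
    have "(real_of_int b)^2 + (real_of_int (b + d))^2 < sqrt 5 * b * (b + d)"
      using Farey_pair_badly_approximating[OF b bd det_left ax True] far_a far_m by simp
    then show False using sqrt5_quadratic_gap[of b d] b outer by simp
  next
    case False
    then have mx: "of_int (a + c) / of_int (b + d) < x" using x_ne by simp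
    have "(real_of_int (b + d))^2 + (real_of_int d)^2 < sqrt 5 * (b + d) * d"
      using Farey_pair_badly_approximating[OF bd d det_right mx xc] far_c far_m by simp
    then show False using sqrt5_quadratic_gap[of d b] d outer by (simp add: algebra_simps)
  qed
qed

text \<open>\<open>Farey_interval x k = (a, b, c, d)\<close> encodes the interval \<open>[a/b, c/d]\<close> between Farey
  neighbours that contains \<open>x\<close> after \<open>k\<close> mediant subdivisions of \<open>[\<lfloor>x\<rfloor>, \<lfloor>x\<rfloor> + 1]\<close>.\<close>

fun Farey_interval :: "real \<Rightarrow> nat \<Rightarrow> int \<times> int \<times> int \<times> int" where
  "Farey_interval x 0 = (\<lfloor>x\<rfloor>, 1, \<lfloor>x\<rfloor> + 1, 1)"
| "Farey_interval x (Suc k) = (case Farey_interval x k of (a, b, c, d) \<Rightarrow>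
      if x < of_int (a + c) / of_int (b + d) then (a, b, a + c, b + d) else (a + c, b + d, c, d))"

lemma irrational_ne_fraction: "x \<notin> \<rat> \<Longrightarrow> x \<noteq> of_int p / of_int q"
  by (metis Rats_divide Rats_of_int)

lemma Farey_interval_invariant:
  assumes "x \<notin> \<rat>" and "Farey_interval x k = (a, b, c, d)"
  shows "0 < b \<and> 0 < d \<and> b*c - a*d = 1 \<and> a/b < x \<and> x < c/d \<and> int k + 2 \<le> b + d"
  using assms(2)
proof (induction k arbitrary: a b c d)
  case 0
  have "of_int \<lfloor>x\<rfloor> \<noteq> x" using irrational_ne_fraction[OF assms(1), of "\<lfloor>x\<rfloor>" 1] by (metis div_by_1 of_int_1)
  then have "\<lfloor>x\<rfloor> < x" using of_int_floor_le[of x] by linarith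
  moreover have "x < \<lfloor>x\<rfloor> + 1" by linarith
  ultimately show ?case using 0 by auto
next
  case (Suc k)
  obtain a' b' c' d' where prev: "Farey_interval x k = (a', b', c', d')" by (metis prod_cases4)
  note IH = Suc.IH[OF prev]
  have "x \<noteq> of_int (a' + c') / of_int (b' + d')" by (rule irrational_ne_fraction[OF assms(1)])
  then show ?case
    using Suc.prems IH by (auto simp: prev algebra_simps split: if_splits)
qed

lemma mediant_between:
  fixes a b c d :: real
  assumes "0 < b" "0 < d" "a/b < c/d"
  shows "a/b < (a + c)/(b + d)" "(a + c)/(b + d) < c/d"
  using assms by (simp_all add: field_simps)

lemma hurwitz_approximation_within:
  assumes x: "x \<notin> \<rat>" and "0 < \<epsilon>"
  shows "\<exists>p q :: int. 0 < q \<and> \<bar>x - of_int p / of_int q\<bar> \<le> 1 / (sqrt 5 * (of_int q)^2)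
    \<and> \<bar>x - of_int p / of_int q\<bar> < \<epsilon>"
proof -
  obtain k :: nat where k: "1/\<epsilon> < k" using reals_Archimedean2 by blast
  obtain a b c d where I: "Farey_interval x k = (a, b, c, d)" by (metis prod_cases4)
  note inv = Farey_interval_invariant[OF x I]
  obtain p q where pq: "(p, q) \<in> {(a, b), (c, d), (a + c, b + d)}" and close: "\<bar>x - p/q\<bar> \<le> 1 / (sqrt 5 * q^2)"
    using hurwitz_Farey_triple[of b d c a x] inv irrational_ne_fraction[OF x] by blast
  have "a/b \<le> p/q \<and> p/q \<le> c/d"
    using pq inv mediant_between[of "of_int b" "of_int d" "of_int a" "of_int c"] by auto
  then have "\<bar>x - p/q\<bar> < c/d - a/b" using inv by linarith
  also have "c/d - a/b = 1 / (b * d)"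
    using inv by (simp add: field_simps flip: of_int_mult of_int_diff)
  also have "\<dots> < \<epsilon>"
  proof -
    have "0 \<le> (b - 1) * (d - 1)" using inv by simp
    moreover have "(b - 1) * (d - 1) = b * d - b - d + 1" by (simp add: algebra_simps)
    ultimately have "int k + 1 \<le> b * d" using inv by linarith
    then have "1/\<epsilon> < b * d" using k by linarith
    then show ?thesis using \<open>0 < \<epsilon>\<close> inv by (simp add: field_simps)
  qed
  finally have "\<bar>x - p/q\<bar> < \<epsilon>" .
  moreover have "0 < q" using pq inv by auto
  ultimately show ?thesis using close by blast
qed

lemma irrational_multiples_far_from_integers:
  assumes x: "x \<notin> \<rat>"
  shows "\<exists>\<eta>>0. \<forall>q\<in>{1..Q::nat}. \<forall>p::int. \<eta> \<le> \<bar>real q * x - of_int p\<bar>"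
proof -
  define h where "h q = \<bar>real q * x - of_int (round (real q * x))\<bar>" for q :: nat
  have "0 < h q" if "1 \<le> q" for q
  proof -
    have "x \<noteq> of_int (round (real q * x)) / of_int (int q)"
      by (rule irrational_ne_fraction[OF x])
    then have "real q * x \<noteq> of_int (round (real q * x))"
      using that by (auto simp: field_simps)
    then show ?thesis by (simp add: h_def)
  qed
  define \<eta> where "\<eta> = Min (insert 1 (h ` {1..Q}))"
  have "0 < \<eta>" using \<open>\<And>q. 1 \<le> q \<Longrightarrow> 0 < h q\<close> by (auto simp: \<eta>_def)
  moreover have "\<eta> \<le> \<bar>real q * x - of_int p\<bar>" if "q \<in> {1..Q}" for q and p :: int
  proof -
    have "\<eta> \<le> h q" unfolding \<eta>_def using that by (intro Min_le) auto
    also have "\<dots> \<le> \<bar>real q * x - of_int p\<bar>" unfolding h_def by (rule round_diff_minimal)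
    finally show ?thesis .
  qed
  ultimately show ?thesis by blast
qed

theorem hurwitz_infinitely_many:
  assumes x: "x \<notin> \<rat>"
  shows "infinite {n::nat. 0 < n \<and> (\<exists>p::int. \<bar>x - of_int p / real n\<bar> \<le> 1 / (sqrt 5 * (real n)^2))}"
  unfolding infinite_nat_iff_unbounded_le
proof
  fix m :: nat
  obtain \<eta> where "0 < \<eta>" and far: "\<forall>q\<in>{1..m}. \<forall>p::int. \<eta> \<le> \<bar>real q * x - of_int p\<bar>"
    using irrational_multiples_far_from_integers[OF x] by blast
  obtain p q :: int where "0 < q" and good: "\<bar>x - of_int p / of_int q\<bar> \<le> 1 / (sqrt 5 * (of_int q)^2)"
    and close: "\<bar>x - of_int p / of_int q\<bar> < \<eta> / (m + 1)"
    using hurwitz_approximation_within[OF x, of "\<eta> / (m + 1)"] \<open>0 < \<eta>\<close> by auto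
  have "m < nat q"
  proof (rule ccontr)
    assume "\<not> m < nat q"
    then have "nat q \<in> {1..m}" using \<open>0 < q\<close> by auto
    then have "\<eta> \<le> \<bar>of_int q * x - of_int p\<bar>" using far \<open>0 < q\<close> by force
    also have "\<dots> = \<bar>of_int q * (x - of_int p / of_int q)\<bar>"
      using \<open>0 < q\<close> by (simp add: right_diff_distrib)
    also have "\<dots> = of_int q * \<bar>x - of_int p / of_int q\<bar>"
      using \<open>0 < q\<close> by (simp add: abs_mult)
    also have "\<dots> \<le> m * \<bar>x - of_int p / of_int q\<bar>"
      using \<open>\<not> m < nat q\<close> by (intro mult_right_mono) linarith+
    also have "\<dots> \<le> m * (\<eta> / (m + 1))"
      using close by (intro mult_left_mono) auto
    also have "\<dots> < \<eta>" using \<open>0 < \<eta>\<close> by (simp add: field_simps)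
    finally show False by simp
  qed
  then show "\<exists>n\<ge>m. n \<in> {n. 0 < n \<and> (\<exists>p::int. \<bar>x - of_int p / real n\<bar> \<le> 1 / (sqrt 5 * (real n)^2))}"
    using \<open>0 < q\<close> good by (intro exI[of _ "nat q"]) auto
qed

theorem theorem4p5:
  fixes c :: real
  assumes "1 / sqrt 5 \<le> c" and "c < 3/2"
  shows "closedin (top_of_set H) (Ec_lift c)
       \<and> Ec_lift c \<inter> Fdom \<in> sets lborel
       \<and> muM (Ec_lift c) < 1
       \<and> (\<forall>x::real. 0 \<le> x \<and> x < 1 \<and> x \<notin> \<rat> \<longrightarrow>
            infinite {n::nat. n > 0 \<and> Rn_lift n x (c / (real n)^2) \<subseteq> Ec_lift c})"
proof -
  have "0 < 1 / sqrt 5" by simp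
  with assms(1) have "0 < c" by linarith
  then have closed: "closedin (top_of_set H) (Ec_lift c)" by (rule closedin_Ec_lift)
  then obtain T where "closed T" and "Ec_lift c = H \<inter> T" by (auto simp: closedin_closed)
  with Fdom_subset_H have "Ec_lift c \<inter> Fdom = T \<inter> Fdom" by blast
  with \<open>closed T\<close> closed_Fdom have "Ec_lift c \<inter> Fdom \<in> sets lborel" by (simp add: borel_closed)
  moreover have "infinite {n::nat. n > 0 \<and> Rn_lift n x (c / (real n)^2) \<subseteq> Ec_lift c}"
    if "x \<notin> \<rat>" for x
  proof (rule infinite_super[OF _ hurwitz_infinitely_many[OF that]])
    show "{n. 0 < n \<and> (\<exists>p::int. \<bar>x - of_int p / real n\<bar> \<le> 1 / (sqrt 5 * (real n)^2))}
        \<subseteq> {n. n > 0 \<and> Rn_lift n x (c / (real n)^2) \<subseteq> Ec_lift c}"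
      using Rn_lift_subset_Ec_lift[OF assms(1)] by blast
  qed
  ultimately show ?thesis
    using closed muM_Ec_lift_less_1[OF \<open>0 < c\<close> assms(2)] by blast
qed

end
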